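(* Let $\ell>0$, $g>0$, $T>0$, and let $f\colon\mathbb R\to\mathbb R$ be a $T$-periodic function of class $C^2$. Then the linear Whitney inverted pendulum problem has a $T$-periodic solution, i.e. there exists a $T$-periodic $C^2$ function $x\colon\mathbb R\to(-\ell,\ell)$ satisfying \[ \ddot x=\left(\frac{g}{\ell^2}\sqrt{\ell^2-x^2}-\frac{\dot x^2}{\ell^2-x^2}\right)x-\frac{\ell^2-x^2}{\ell^2}\,\ddot f(t)\quad\text{for all }t\in\mathbb R. \]
   Context: The linear Whitney inverted pendulum problem: a rod of length $\ell$, with its whole mass concentrated at its top, is pivoted (frictionlessly) on the floor of a car moving along a straight line, the pivot being at position $f(t)$ at time $t$; the rod moves in the vertical plane containing the line under gravity (gravitational constant $g$) and the motion of the car. Writing $x(t)$ for the horizontal displacement of the top of the rod relative to the pivot (so the height of the top is $\sqrt{\ell^2-x(t)^2}$), Newton's law gives the displayed differential equation. A solution for which the rod never touches the floor is one with $|x(t)|<\ell$ for all $t$; a $T$-periodic solution of the problem is such a solution which is $T$-periodic. *)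

theory Defs
  imports "HOL-Analysis.Analysis"
begin

definition C2_with :: "(real \<Rightarrow> real) \<Rightarrow> (real \<Rightarrow> real) \<Rightarrow> (real \<Rightarrow> real) \<Rightarrow> bool" where
  "C2_with u u' u'' \<longleftrightarrow>
     (\<forall>t. (u has_real_derivative u' t) (at t)) \<and>
     (\<forall>t. (u' has_real_derivative u'' t) (at t)) \<and>
     continuous_on UNIV u''"

definition periodic_with :: "real \<Rightarrow> (real \<Rightarrow> real) \<Rightarrow> bool" where
  "periodic_with T u \<longleftrightarrow> (\<forall>t. u (t + T) = u t)"

end

(* Writing x = l sin \<theta> with |\<theta>| < pi/2 turns the pendulum equation into
   \<theta>'' = h t \<theta> with h t \<theta> = (g/l) sin \<theta> - (f'' t / l) cos \<theta>.  The constants -pi/2 and pi/2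
   are strict lower and upper solutions of this equation, and h t \<theta> - M \<theta> is nonincreasing
   in \<theta> for a large constant M.  Inverting u'' - M u on T-periodic functions by an explicit
   positive integral operator, the monotone iteration
   \<theta>_(n+1) = (M - d^2/dt^2)^(-1) (M \<theta>_n - h t \<theta>_n), started at -pi/2, increases to a
   T-periodic solution that stays strictly between -pi/2 and pi/2. *)

theory Submission
  imports Defs
begin

section \<open>Periodic functions\<close>

lemma periodic_int:
  fixes u :: "real \<Rightarrow> 'a"
  assumes "\<And>t. u (t + T) = u t"
  shows "u (t + of_int k * T) = u t"
proof (induction k rule: int_induct[where k = 0])
  case (step1 i)
  have "u (t + of_int (i + 1) * T) = u ((t + of_int i * T) + T)"
    by (simp add: algebra_simps)
  with step1 assms show ?case by simp
next
  case (step2 i)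
  have "u (t + of_int i * T) = u ((t + of_int (i - 1) * T) + T)"
    by (simp add: algebra_simps)
  with step2 assms show ?case by simp
qed simp

lemma periodic_range:
  fixes u :: "real \<Rightarrow> 'a"
  assumes "\<And>t. u (t + T) = u t" "T > 0"
  shows "range u = u ` {0..T}"
proof -
  have "u t \<in> u ` {0..T}" for t
  proof
    define s where "s = t - of_int \<lfloor>t / T\<rfloor> * T"
    have "of_int \<lfloor>t / T\<rfloor> * T \<le> t" "t < (of_int \<lfloor>t / T\<rfloor> + 1) * T"
      using assms(2) by (simp_all add: floor_divide_lower floor_divide_upper)
    then show "s \<in> {0..T}"
      by (auto simp: s_def algebra_simps)
    show "u t = u s"
      using periodic_int[of u T s "\<lfloor>t / T\<rfloor>"] assms(1) by (simp add: s_def)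
  qed
  then show ?thesis by auto
qed

lemma periodic_continuous_bounded:
  fixes u :: "real \<Rightarrow> 'a::metric_space"
  assumes "continuous_on UNIV u" "\<And>t. u (t + T) = u t" "T > 0"
  shows "bounded (range u)"
  unfolding periodic_range[of u T, OF assms(2,3)]
  by (intro compact_imp_bounded compact_continuous_image continuous_on_subset[OF assms(1)]) auto

lemma periodic_derivative:
  assumes "\<And>t. (u has_real_derivative u' t) (at t)" "\<And>t. u (t + T) = u t"
  shows "u' (t + T) = u' t"
proof -
  have "((\<lambda>s. u (s + T)) has_real_derivative u' (t + T) * 1) (at t)"
    by (rule DERIV_chain2[OF assms(1)]) (auto intro!: derivative_eq_intros)
  moreover have "(\<lambda>s. u (s + T)) = u"
    using assms(2) by auto
  ultimately have "(u has_real_derivative u' (t + T)) (at t)"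
    by simp
  then show ?thesis
    using assms(1) by (rule DERIV_unique)
qed

lemma periodic_reflect:
  fixes u :: "real \<Rightarrow> 'a"
  assumes "\<And>t. u (t + T) = u t"
  shows "u (- (t + T)) = u (- t)"
  using assms[of "- t - T"] by simp

section \<open>Periodic solutions of linear equations with constant coefficients\<close>

lemma has_real_derivative_integral_window:
  fixes \<phi> :: "real \<Rightarrow> real"
  assumes "continuous_on UNIV \<phi>" "a \<le> b"
  shows "((\<lambda>t. integral {t + a..t + b} \<phi>) has_real_derivative \<phi> (t + b) - \<phi> (t + a)) (at t)"
proof -
  obtain F where F: "\<And>x. (F has_real_derivative \<phi> x) (at x)"
    using einterval_antiderivative[of "-\<infinity>" "\<infinity>" \<phi>] assms(1)
    by (auto simp: continuous_on_eq_continuous_at has_real_derivative_iff_has_vector_derivative)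
  have "(\<phi> has_integral F (t + b) - F (t + a)) {t + a..t + b}" for t
    using assms(2) F
    by (intro fundamental_theorem_of_calculus)
       (auto simp: has_real_derivative_iff_has_vector_derivative[symmetric] intro: has_field_derivative_at_within)
  then have "(\<lambda>t. integral {t + a..t + b} \<phi>) = (\<lambda>t. F (t + b) - F (t + a))"
    by (auto simp: integral_unique)
  then show ?thesis
    by (auto intro!: derivative_eq_intros DERIV_chain2[OF F])
qed

(* The T-periodic solution of u' + m * u = w, for T-periodic w. *)
definition per_sol_plus :: "real \<Rightarrow> real \<Rightarrow> (real \<Rightarrow> real) \<Rightarrow> real \<Rightarrow> real" where
  "per_sol_plus m T w t =
     exp (- m * t) * integral {t - T..t} (\<lambda>s. exp (m * s) * w s) / (1 - exp (- m * T))"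

lemma per_sol_plus_has_derivative:
  assumes w: "continuous_on UNIV w" "\<And>t. w (t + T) = w t" and "m > 0" "T > 0"
  shows "(per_sol_plus m T w has_real_derivative w t - m * per_sol_plus m T w t) (at t)"
proof -
  define c where "c = 1 - exp (- m * T)"
  define I where "I t = integral {t - T..t} (\<lambda>s. exp (m * s) * w s)" for t
  have "c \<noteq> 0"
    using assms(3,4) by (simp add: c_def)
  have I_deriv: "(I has_real_derivative exp (m * t) * w t - exp (m * (t - T)) * w (t - T)) (at t)"
    using has_real_derivative_integral_window[of "\<lambda>s. exp (m * s) * w s" "- T" 0 t] w(1) assms(4)
    by (simp add: I_def[abs_def] continuous_intros)
  have "w (t - T) = w t"
    using w(2)[of "t - T"] by simp
  then have "exp (m * t) * w t - exp (m * (t - T)) * w (t - T) = c * exp (m * t) * w t"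
    by (simp add: c_def exp_diff exp_minus field_simps)
  with I_deriv have I': "(I has_real_derivative c * exp (m * t) * w t) (at t)"
    by simp
  have "((\<lambda>t. exp (- m * t) * I t) has_real_derivative
          - m * exp (- m * t) * I t + exp (- m * t) * (c * exp (m * t) * w t)) (at t)"
    by (auto intro!: derivative_eq_intros I')
  then have "((\<lambda>t. exp (- m * t) * I t / c) has_real_derivative
          (- m * exp (- m * t) * I t + exp (- m * t) * (c * exp (m * t) * w t)) / c) (at t)"
    by (rule DERIV_cdivide)
  moreover have "per_sol_plus m T w = (\<lambda>t. exp (- m * t) * I t / c)"
    by (simp add: per_sol_plus_def[abs_def] I_def c_def)
  ultimately show ?thesis
    using \<open>c \<noteq> 0\<close> by (simp add: field_simps exp_minus)
qed

lemma per_sol_plus_periodic: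
  assumes "continuous_on UNIV w" "\<And>t. w (t + T) = w t"
  shows "per_sol_plus m T w (t + T) = per_sol_plus m T w t"
proof -
  have "integral {t..t + T} (\<lambda>s. exp (m * s) * w s)
          = integral {t - T..t} ((\<lambda>s. exp (m * s) * w s) \<circ> (\<lambda>s. s + T))"
    using integral_shift[of "t - T" T t "\<lambda>s. exp (m * s) * w s"] assms(1)
    by (simp add: continuous_intros continuous_on_subset)
  also have "\<dots> = integral {t - T..t} (\<lambda>s. exp (m * T) * (exp (m * s) * w s))"
    using assms(2) by (simp add: o_def distrib_left exp_add algebra_simps)
  also have "\<dots> = exp (m * T) * integral {t - T..t} (\<lambda>s. exp (m * s) * w s)"
    by simp
  finally have shift: "integral {t..t + T} (\<lambda>s. exp (m * s) * w s)
                         = exp (m * T) * integral {t - T..t} (\<lambda>s. exp (m * s) * w s)" .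
  have "exp (- m * (t + T)) * exp (m * T) = exp (- m * t)"
    by (simp add: mult_exp_exp algebra_simps)
  then show ?thesis
    by (simp add: per_sol_plus_def shift mult.assoc[symmetric])
qed

lemma per_sol_plus_mono:
  assumes "continuous_on UNIV v" "continuous_on UNIV w" "\<And>s. v s \<le> w s" "m > 0" "T > 0"
  shows "per_sol_plus m T v t \<le> per_sol_plus m T w t"
  unfolding per_sol_plus_def using assms
  by (intro divide_right_mono mult_left_mono integral_le integrable_continuous_interval)
     (auto intro!: continuous_intros intro: continuous_on_subset)

lemma per_sol_plus_const:
  assumes "m > 0" "T > 0"
  shows "per_sol_plus m T (\<lambda>_. k) t = k / m"
proof -
  have "integral {t - T..t} (\<lambda>s. exp (m * s) * k) = k * exp (m * t) / m - k * exp (m * (t - T)) / m"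
    using assms
    by (intro integral_unique fundamental_theorem_of_calculus)
       (auto intro!: derivative_eq_intros simp: has_real_derivative_iff_has_vector_derivative[symmetric])
  then show ?thesis
    using assms unfolding per_sol_plus_def
    by (simp add: exp_diff exp_minus field_simps)
qed

lemma per_sol_plus_bounds:
  assumes "continuous_on UNIV w" "\<And>s. c \<le> w s" "\<And>s. w s \<le> d" "m > 0" "T > 0"
  shows "c / m \<le> per_sol_plus m T w t" "per_sol_plus m T w t \<le> d / m"
  using per_sol_plus_mono[of "\<lambda>_. c" w m T t] per_sol_plus_mono[of w "\<lambda>_. d" m T t] assms
  by (simp_all add: per_sol_plus_const)

lemma per_sol_plus_tendsto:
  assumes "\<And>n. continuous_on UNIV (w n)" "continuous_on UNIV v"
    and "\<And>n s. \<bar>w n s\<bar> \<le> B" "\<And>s. (\<lambda>n. w n s) \<longlonglongrightarrow> v s"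
  shows "(\<lambda>n. per_sol_plus m T (w n) t) \<longlonglongrightarrow> per_sol_plus m T v t"
proof -
  have "(\<lambda>n. integral {t - T..t} (\<lambda>s. exp (m * s) * w n s))
          \<longlonglongrightarrow> integral {t - T..t} (\<lambda>s. exp (m * s) * v s)"
  proof (rule Equivalence_Lebesgue_Henstock_Integration.dominated_convergence(2))
    show "(\<lambda>s. exp (m * s) * w n s) integrable_on {t - T..t}" for n
      by (intro integrable_continuous_interval continuous_intros continuous_on_subset[OF assms(1)]) auto
    show "(\<lambda>s. exp (m * s) * B) integrable_on {t - T..t}"
      by (intro integrable_continuous_interval continuous_intros)
    show "norm (exp (m * s) * w n s) \<le> exp (m * s) * B" for n s
      using assms(3)[of n s] by (simp add: abs_mult)
    show "(\<lambda>n. exp (m * s) * w n s) \<longlonglongrightarrow> exp (m * s) * v s" for s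
      by (intro tendsto_intros assms(4))
  qed
  then show ?thesis
    unfolding per_sol_plus_def divide_inverse by (intro tendsto_mult_right tendsto_mult_left)
qed

lemma continuous_on_reflect:
  fixes w :: "real \<Rightarrow> 'a::topological_space"
  assumes "continuous_on UNIV w"
  shows "continuous_on UNIV (\<lambda>s. w (- s))"
  by (intro continuous_on_compose2[OF assms] continuous_intros) auto

(* The T-periodic solution of u' - m * u = - w, obtained by time reversal from per_sol_plus;
   explicitly exp (m * t) * integral {t..t + T} (\<lambda>s. exp (- m * s) * w s) / (1 - exp (- m * T)). *)
definition per_sol_minus :: "real \<Rightarrow> real \<Rightarrow> (real \<Rightarrow> real) \<Rightarrow> real \<Rightarrow> real" where
  "per_sol_minus m T w t = per_sol_plus m T (\<lambda>s. w (- s)) (- t)"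

lemma per_sol_minus_has_derivative:
  assumes "continuous_on UNIV w" "\<And>t. w (t + T) = w t" "m > 0" "T > 0"
  shows "(per_sol_minus m T w has_real_derivative m * per_sol_minus m T w t - w t) (at t)"
proof -
  have periodic: "w (- (s + T)) = w (- s)" for s
    using assms(2) by (rule periodic_reflect)
  from per_sol_plus_has_derivative[OF continuous_on_reflect[OF assms(1)] periodic assms(3,4), of "- t"]
  have "(per_sol_plus m T (\<lambda>s. w (- s)) has_real_derivative
          w t - m * per_sol_minus m T w t) (at (- t))"
    by (simp add: per_sol_minus_def)
  then have "((\<lambda>t. per_sol_plus m T (\<lambda>s. w (- s)) (- t)) has_real_derivative
                (w t - m * per_sol_minus m T w t) * - 1) (at t)"
    by (rule DERIV_chain2) (auto intro!: derivative_eq_intros)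
  then show ?thesis
    by (simp add: per_sol_minus_def[abs_def] algebra_simps)
qed

lemma per_sol_minus_periodic:
  assumes "continuous_on UNIV w" "\<And>t. w (t + T) = w t"
  shows "per_sol_minus m T w (t + T) = per_sol_minus m T w t"
proof -
  have "w (- (s + T)) = w (- s)" for s
    using assms(2) by (rule periodic_reflect)
  then show ?thesis
    using per_sol_plus_periodic[OF continuous_on_reflect[OF assms(1)], of T m "- t - T"]
    by (simp add: per_sol_minus_def)
qed

lemma per_sol_minus_mono:
  assumes "continuous_on UNIV v" "continuous_on UNIV w" "\<And>s. v s \<le> w s" "m > 0" "T > 0"
  shows "per_sol_minus m T v t \<le> per_sol_minus m T w t"
  unfolding per_sol_minus_def using assms
  by (intro per_sol_plus_mono continuous_on_reflect) auto

lemma per_sol_minus_bounds: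
  assumes "continuous_on UNIV w" "\<And>s. c \<le> w s" "\<And>s. w s \<le> d" "m > 0" "T > 0"
  shows "c / m \<le> per_sol_minus m T w t" "per_sol_minus m T w t \<le> d / m"
  using per_sol_plus_bounds[OF continuous_on_reflect[OF assms(1)], of c d m T "- t"] assms(2-5)
  by (simp_all add: per_sol_minus_def)

lemma per_sol_minus_tendsto:
  assumes "\<And>n. continuous_on UNIV (w n)" "continuous_on UNIV v"
    and "\<And>n s. \<bar>w n s\<bar> \<le> B" "\<And>s. (\<lambda>n. w n s) \<longlonglongrightarrow> v s"
  shows "(\<lambda>n. per_sol_minus m T (w n) t) \<longlonglongrightarrow> per_sol_minus m T v t"
  unfolding per_sol_minus_def using assms
  by (intro per_sol_plus_tendsto[where B = B] continuous_on_reflect) auto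

(* The T-periodic solution of u'' = m^2 * u - w. *)
definition per_sol2 :: "real \<Rightarrow> real \<Rightarrow> (real \<Rightarrow> real) \<Rightarrow> real \<Rightarrow> real" where
  "per_sol2 m T w t = (per_sol_plus m T w t + per_sol_minus m T w t) / (2 * m)"

definition per_sol2_deriv :: "real \<Rightarrow> real \<Rightarrow> (real \<Rightarrow> real) \<Rightarrow> real \<Rightarrow> real" where
  "per_sol2_deriv m T w t = (per_sol_minus m T w t - per_sol_plus m T w t) / 2"

lemma per_sol2_C2_with:
  assumes "continuous_on UNIV w" "\<And>t. w (t + T) = w t" "m > 0" "T > 0"
  shows "C2_with (per_sol2 m T w) (per_sol2_deriv m T w) (\<lambda>t. m\<^sup>2 * per_sol2 m T w t - w t)"
proof -
  note plus = per_sol_plus_has_derivative[OF assms]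
   and minus = per_sol_minus_has_derivative[OF assms]
  have D1: "(per_sol2 m T w has_real_derivative per_sol2_deriv m T w t) (at t)" for t
  proof -
    have "(per_sol2 m T w has_real_derivative
             ((w t - m * per_sol_plus m T w t) + (m * per_sol_minus m T w t - w t)) / (2 * m)) (at t)"
      unfolding per_sol2_def[abs_def] by (intro DERIV_cdivide DERIV_add plus minus)
    moreover have "((w t - m * per_sol_plus m T w t) + (m * per_sol_minus m T w t - w t)) / (2 * m)
                     = per_sol2_deriv m T w t"
      using assms(3) by (simp add: per_sol2_deriv_def field_simps)
    ultimately show ?thesis
      by (simp only:)
  qed
  have D2: "(per_sol2_deriv m T w has_real_derivative m\<^sup>2 * per_sol2 m T w t - w t) (at t)" for t
  proof -
    have "(per_sol2_deriv m T w has_real_derivative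
             ((m * per_sol_minus m T w t - w t) - (w t - m * per_sol_plus m T w t)) / 2) (at t)"
      unfolding per_sol2_deriv_def[abs_def] by (intro DERIV_cdivide DERIV_diff plus minus)
    moreover have "((m * per_sol_minus m T w t - w t) - (w t - m * per_sol_plus m T w t)) / 2
                     = m\<^sup>2 * per_sol2 m T w t - w t"
      using assms(3) by (simp add: per_sol2_def power2_eq_square field_simps)
    ultimately show ?thesis
      by (simp only:)
  qed
  have "continuous_on UNIV (per_sol2 m T w)"
    using D1 by (meson DERIV_continuous continuous_at_imp_continuous_on)
  then have "continuous_on UNIV (\<lambda>t. m\<^sup>2 * per_sol2 m T w t - w t)"
    by (intro continuous_intros assms(1))
  with D1 D2 show ?thesis
    by (simp add: C2_with_def)
qed

lemma per_sol2_periodic: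
  assumes "continuous_on UNIV w" "\<And>t. w (t + T) = w t"
  shows "per_sol2 m T w (t + T) = per_sol2 m T w t"
  using per_sol_plus_periodic[OF assms] per_sol_minus_periodic[OF assms]
  by (simp add: per_sol2_def)

lemma per_sol2_mono:
  assumes "continuous_on UNIV v" "continuous_on UNIV w" "\<And>s. v s \<le> w s" "m > 0" "T > 0"
  shows "per_sol2 m T v t \<le> per_sol2 m T w t"
  unfolding per_sol2_def using assms(4)
  by (intro divide_right_mono add_mono per_sol_plus_mono[OF assms] per_sol_minus_mono[OF assms]) auto

lemma per_sol2_bounds:
  assumes "continuous_on UNIV w" "\<And>s. c \<le> w s" "\<And>s. w s \<le> d" "m > 0" "T > 0"
  shows "c / m\<^sup>2 \<le> per_sol2 m T w t" "per_sol2 m T w t \<le> d / m\<^sup>2"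
proof -
  note plus = per_sol_plus_bounds[OF assms, of t] and minus = per_sol_minus_bounds[OF assms, of t]
  have "c / m\<^sup>2 = (c / m + c / m) / (2 * m)"
    using assms(4) by (simp add: power2_eq_square field_simps)
  also have "\<dots> \<le> per_sol2 m T w t"
    unfolding per_sol2_def using plus minus assms(4) by (intro divide_right_mono add_mono) auto
  finally show "c / m\<^sup>2 \<le> per_sol2 m T w t" .
  have "per_sol2 m T w t \<le> (d / m + d / m) / (2 * m)"
    unfolding per_sol2_def using plus minus assms(4) by (intro divide_right_mono add_mono) auto
  also have "\<dots> = d / m\<^sup>2"
    using assms(4) by (simp add: power2_eq_square field_simps)
  finally show "per_sol2 m T w t \<le> d / m\<^sup>2" .
qed

lemma per_sol2_derivative_bound:
  assumes "continuous_on UNIV w" "\<And>s. c \<le> w s" "\<And>s. w s \<le> d" "m > 0" "T > 0"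
  shows "\<bar>per_sol2_deriv m T w t\<bar> \<le> (d - c) / (2 * m)"
proof -
  have "(d - c) / (2 * m) = (d / m - c / m) / 2"
    using assms(4) by (simp add: field_simps)
  then show ?thesis
    using per_sol_plus_bounds[OF assms, of t] per_sol_minus_bounds[OF assms, of t]
    by (simp add: per_sol2_deriv_def abs_le_iff)
qed

lemma per_sol2_tendsto:
  assumes "\<And>n. continuous_on UNIV (w n)" "continuous_on UNIV v"
    and "\<And>n s. \<bar>w n s\<bar> \<le> B" "\<And>s. (\<lambda>n. w n s) \<longlonglongrightarrow> v s"
  shows "(\<lambda>n. per_sol2 m T (w n) t) \<longlonglongrightarrow> per_sol2 m T v t"
  unfolding per_sol2_def divide_inverse
  by (intro tendsto_mult_right tendsto_add per_sol_plus_tendsto[OF assms] per_sol_minus_tendsto[OF assms])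

section \<open>Monotone iteration between constant lower and upper solutions\<close>

locale periodic_lower_upper =
  fixes h :: "real \<Rightarrow> real \<Rightarrow> real" and T M \<alpha> \<beta> \<delta> :: real
  assumes T_pos: "T > 0" and M_pos: "M > 0" and \<delta>_nonneg: "\<delta> \<ge> 0" and \<alpha>_le_\<beta>: "\<alpha> \<le> \<beta>"
    and h_continuous: "continuous_on UNIV (\<lambda>(t, y). h t y)"
    and h_periodic: "\<And>t y. h (t + T) y = h t y"
    and h_one_sided_lipschitz: "\<And>t x y. x \<le> y \<Longrightarrow> h t y - h t x \<le> M * (y - x)"
    and lower_solution: "\<And>t. h t \<alpha> \<le> - \<delta>"
    and upper_solution: "\<And>t. \<delta> \<le> h t \<beta>"
begin

definition m :: real where
  "m = sqrt M"

lemma m_pos: "m > 0"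
  using M_pos by (simp add: m_def)

lemma m_square: "m\<^sup>2 = M"
  using M_pos by (simp add: m_def)

(* The equation \<theta>'' = h t \<theta> is rewritten as \<theta>'' = M * \<theta> - rhs \<theta>; the one-sided
   Lipschitz bound makes rhs monotone in \<theta>, so that iterating iter_op from the lower
   solution \<alpha> gives an increasing sequence. *)
definition rhs :: "(real \<Rightarrow> real) \<Rightarrow> real \<Rightarrow> real" where
  "rhs \<theta> t = M * \<theta> t - h t (\<theta> t)"

definition iter_op :: "(real \<Rightarrow> real) \<Rightarrow> real \<Rightarrow> real" where
  "iter_op \<theta> = per_sol2 m T (rhs \<theta>)"

definition admissible :: "(real \<Rightarrow> real) \<Rightarrow> bool" where
  "admissible \<theta> \<longleftrightarrow>
     continuous_on UNIV \<theta> \<and> (\<forall>t. \<theta> (t + T) = \<theta> t) \<and> (\<forall>t. \<alpha> \<le> \<theta> t \<and> \<theta> t \<le> \<beta>)"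

lemma rhs_mono: "\<theta>\<^sub>1 t \<le> \<theta>\<^sub>2 t \<Longrightarrow> rhs \<theta>\<^sub>1 t \<le> rhs \<theta>\<^sub>2 t"
  using h_one_sided_lipschitz[of "\<theta>\<^sub>1 t" "\<theta>\<^sub>2 t" t] by (simp add: rhs_def algebra_simps)

lemma rhs_bounds:
  assumes "\<alpha> \<le> \<theta> t" "\<theta> t \<le> \<beta>"
  shows "M * \<alpha> + \<delta> \<le> rhs \<theta> t" "rhs \<theta> t \<le> M * \<beta> - \<delta>"
  using rhs_mono[of "\<lambda>_. \<alpha>" t \<theta>] rhs_mono[of \<theta> t "\<lambda>_. \<beta>"] assms
    lower_solution[of t] upper_solution[of t]
  by (simp_all add: rhs_def)

lemma isCont_h: "isCont (h t) y"
proof -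
  have "continuous_on UNIV (\<lambda>y. (\<lambda>(t, y). h t y) (t, y))"
    by (intro continuous_on_compose2[OF h_continuous] continuous_intros) auto
  then show ?thesis
    by (simp add: continuous_on_eq_continuous_at)
qed

lemma rhs_continuous: "continuous_on UNIV \<theta> \<Longrightarrow> continuous_on UNIV (rhs \<theta>)"
  unfolding rhs_def[abs_def]
  by (intro continuous_intros continuous_on_compose2[OF h_continuous, of _ "\<lambda>t. (t, \<theta> t)", simplified])
     auto

lemma rhs_periodic: "(\<And>t. \<theta> (t + T) = \<theta> t) \<Longrightarrow> rhs \<theta> (t + T) = rhs \<theta> t"
  by (simp add: rhs_def h_periodic)

lemma admissible_rhs:
  assumes "admissible \<theta>"
  shows "continuous_on UNIV (rhs \<theta>)" "\<And>t. rhs \<theta> (t + T) = rhs \<theta> t"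
    and "\<And>t. M * \<alpha> + \<delta> \<le> rhs \<theta> t" "\<And>t. rhs \<theta> t \<le> M * \<beta> - \<delta>"
  using assms rhs_continuous rhs_periodic rhs_bounds by (auto simp: admissible_def)

lemma iter_op_C2_with:
  assumes "admissible \<theta>"
  obtains \<theta>' where "C2_with (iter_op \<theta>) \<theta>' (\<lambda>t. M * iter_op \<theta> t - rhs \<theta> t)"
    and "\<And>t. \<bar>\<theta>' t\<bar> \<le> M * (\<beta> - \<alpha>) / (2 * m)"
proof
  note rhs = admissible_rhs[OF assms]
  show "C2_with (iter_op \<theta>) (per_sol2_deriv m T (rhs \<theta>)) (\<lambda>t. M * iter_op \<theta> t - rhs \<theta> t)"
    using per_sol2_C2_with[OF rhs(1,2) m_pos T_pos] by (simp add: iter_op_def m_square)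
  have "(M * \<beta> - \<delta> - (M * \<alpha> + \<delta>)) / (2 * m) \<le> M * (\<beta> - \<alpha>) / (2 * m)"
    using \<delta>_nonneg m_pos by (intro divide_right_mono) (auto simp: algebra_simps)
  then show "\<bar>per_sol2_deriv m T (rhs \<theta>) t\<bar> \<le> M * (\<beta> - \<alpha>) / (2 * m)" for t
    using per_sol2_derivative_bound[OF rhs(1,3,4) m_pos T_pos, of t] by linarith
qed

lemma iter_op_bounds:
  assumes "admissible \<theta>"
  shows "\<alpha> + \<delta> / M \<le> iter_op \<theta> t" "iter_op \<theta> t \<le> \<beta> - \<delta> / M"
proof -
  have "(M * \<alpha> + \<delta>) / m\<^sup>2 = \<alpha> + \<delta> / M" "(M * \<beta> - \<delta>) / m\<^sup>2 = \<beta> - \<delta> / M"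
    using M_pos by (simp_all add: m_square field_simps)
  then show "\<alpha> + \<delta> / M \<le> iter_op \<theta> t" "iter_op \<theta> t \<le> \<beta> - \<delta> / M"
    using per_sol2_bounds[OF admissible_rhs(1,3,4)[OF assms] m_pos T_pos, of t]
    by (simp_all add: iter_op_def)
qed

lemma iter_op_admissible:
  assumes "admissible \<theta>"
  shows "admissible (iter_op \<theta>)"
proof -
  obtain \<theta>' where "C2_with (iter_op \<theta>) \<theta>' (\<lambda>t. M * iter_op \<theta> t - rhs \<theta> t)"
    using iter_op_C2_with[OF assms] .
  then have "continuous_on UNIV (iter_op \<theta>)"
    unfolding C2_with_def by (meson DERIV_continuous continuous_at_imp_continuous_on)
  moreover have "iter_op \<theta> (t + T) = iter_op \<theta> t" for t
    using per_sol2_periodic[OF admissible_rhs(1,2)[OF assms]] by (simp add: iter_op_def)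
  moreover have "\<alpha> \<le> iter_op \<theta> t \<and> iter_op \<theta> t \<le> \<beta>" for t
  proof -
    have "0 \<le> \<delta> / M"
      using \<delta>_nonneg M_pos by simp
    then show ?thesis
      using iter_op_bounds[OF assms, of t] by linarith
  qed
  ultimately show ?thesis
    by (simp add: admissible_def)
qed

lemma iter_op_mono:
  assumes "admissible \<theta>\<^sub>1" "admissible \<theta>\<^sub>2" "\<And>s. \<theta>\<^sub>1 s \<le> \<theta>\<^sub>2 s"
  shows "iter_op \<theta>\<^sub>1 t \<le> iter_op \<theta>\<^sub>2 t"
proof -
  have "rhs \<theta>\<^sub>1 s \<le> rhs \<theta>\<^sub>2 s" for s
    using assms(3) by (rule rhs_mono)
  then show ?thesis
    unfolding iter_op_def
    using admissible_rhs(1)[OF assms(1)] admissible_rhs(1)[OF assms(2)] m_pos T_pos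
    by (intro per_sol2_mono)
qed

lemma iter_op_lipschitz:
  assumes "admissible \<theta>"
  shows "\<bar>iter_op \<theta> t - iter_op \<theta> s\<bar> \<le> M * (\<beta> - \<alpha>) / (2 * m) * \<bar>t - s\<bar>"
proof -
  obtain \<theta>' where C2: "C2_with (iter_op \<theta>) \<theta>' (\<lambda>t. M * iter_op \<theta> t - rhs \<theta> t)"
    and bound: "\<And>t. \<bar>\<theta>' t\<bar> \<le> M * (\<beta> - \<alpha>) / (2 * m)"
    using iter_op_C2_with[OF assms] by blast
  from C2 have "(iter_op \<theta> has_field_derivative \<theta>' x) (at x within UNIV)" for x
    by (simp add: C2_with_def)
  then show ?thesis
    using field_differentiable_bound[OF convex_UNIV, of "iter_op \<theta>" \<theta>' "M * (\<beta> - \<alpha>) / (2 * m)" t s]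
      bound
    by simp
qed

lemma iter_op_tendsto:
  assumes "\<And>n. admissible (\<theta>s n)" "admissible \<theta>" "\<And>t. (\<lambda>n. \<theta>s n t) \<longlonglongrightarrow> \<theta> t"
  shows "(\<lambda>n. iter_op (\<theta>s n) t) \<longlonglongrightarrow> iter_op \<theta> t"
  unfolding iter_op_def
proof (rule per_sol2_tendsto)
  show "continuous_on UNIV (rhs (\<theta>s n))" for n
    using admissible_rhs(1)[OF assms(1)] .
  show "continuous_on UNIV (rhs \<theta>)"
    using admissible_rhs(1)[OF assms(2)] .
  show "\<bar>rhs (\<theta>s n) s\<bar> \<le> \<bar>M * \<alpha> + \<delta>\<bar> + \<bar>M * \<beta> - \<delta>\<bar>" for n s
    using admissible_rhs(3,4)[OF assms(1), of n s] by linarith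
  show "(\<lambda>n. rhs (\<theta>s n) s) \<longlonglongrightarrow> rhs \<theta> s" for s
    unfolding rhs_def by (intro tendsto_intros isCont_tendsto_compose[OF isCont_h] assms(3))
qed

definition approx :: "nat \<Rightarrow> real \<Rightarrow> real" where
  "approx n = (iter_op ^^ n) (\<lambda>_. \<alpha>)"

lemma approx_Suc: "approx (Suc n) = iter_op (approx n)"
  by (simp add: approx_def)

lemma approx_admissible: "admissible (approx n)"
proof (induction n)
  case 0
  show ?case
    using \<alpha>_le_\<beta> by (simp add: approx_def admissible_def)
next
  case (Suc n)
  then show ?case
    by (simp add: approx_Suc iter_op_admissible)
qed

lemma approx_incseq: "approx n t \<le> approx (Suc n) t"
proof (induction n arbitrary: t)
  case 0
  have "\<alpha> \<le> \<alpha> + \<delta> / M"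
    using \<delta>_nonneg M_pos by simp
  also have "\<dots> \<le> approx 1 t"
    using iter_op_bounds(1)[OF approx_admissible[of 0]] by (simp add: approx_Suc)
  finally show ?case
    by (simp add: approx_def)
next
  case (Suc n)
  have "iter_op (approx n) t \<le> iter_op (approx (Suc n)) t"
    by (rule iter_op_mono[OF approx_admissible approx_admissible Suc])
  then show ?case
    by (simp add: approx_Suc)
qed

lemma approx_lipschitz: "\<bar>approx n t - approx n s\<bar> \<le> M * (\<beta> - \<alpha>) / (2 * m) * \<bar>t - s\<bar>"
proof (cases n)
  case 0
  then show ?thesis
    using M_pos m_pos \<alpha>_le_\<beta> by (simp add: approx_def)
next
  case (Suc k)
  then show ?thesis
    using iter_op_lipschitz[OF approx_admissible[of k]] by (simp add: approx_Suc)
qed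

definition solution :: "real \<Rightarrow> real" where
  "solution t = (SUP n. approx n t)"

lemma approx_tendsto: "(\<lambda>n. approx n t) \<longlonglongrightarrow> solution t"
  unfolding solution_def
proof (rule LIMSEQ_incseq_SUP)
  show "bdd_above (range (\<lambda>n. approx n t))"
    using approx_admissible by (auto simp: admissible_def intro: bdd_aboveI[of _ \<beta>])
  show "incseq (\<lambda>n. approx n t)"
    using approx_incseq by (rule incseq_SucI)
qed

lemma solution_admissible: "admissible solution"
proof -
  (* A monotone pointwise limit of continuous functions need not be continuous; the uniform
     Lipschitz bound on the iterates is what makes the limit continuous. *)
  have "\<bar>solution t - solution s\<bar> \<le> M * (\<beta> - \<alpha>) / (2 * m) * \<bar>t - s\<bar>" for t s
    by (rule LIMSEQ_le_const2[OF tendsto_rabs[OF tendsto_diff[OF approx_tendsto approx_tendsto]]])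
       (use approx_lipschitz in auto)
  then have "continuous_on UNIV solution"
    by (intro lipschitz_on_continuous_on[where L = "M * (\<beta> - \<alpha>) / (2 * m)"] lipschitz_onI)
       (use M_pos m_pos \<alpha>_le_\<beta> in \<open>auto simp: dist_real_def\<close>)
  moreover have "solution (t + T) = solution t" for t
    using approx_tendsto[of "t + T"] approx_tendsto[of t] approx_admissible
    by (auto simp: admissible_def intro: LIMSEQ_unique)
  moreover have "\<alpha> \<le> solution t \<and> solution t \<le> \<beta>" for t
    using approx_admissible
    by (auto simp: admissible_def intro!: LIMSEQ_le_const[OF approx_tendsto] LIMSEQ_le_const2[OF approx_tendsto])
  ultimately show ?thesis
    by (simp add: admissible_def)
qed

lemma iter_op_solution: "iter_op solution = solution"
proof
  fix t
  have "(\<lambda>n. iter_op (approx n) t) \<longlonglongrightarrow> iter_op solution t"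
    by (rule iter_op_tendsto[OF approx_admissible solution_admissible approx_tendsto])
  moreover have "(\<lambda>n. iter_op (approx n) t) \<longlonglongrightarrow> solution t"
    using LIMSEQ_Suc[OF approx_tendsto[of t]] by (simp add: approx_Suc)
  ultimately show "iter_op solution t = solution t"
    by (rule LIMSEQ_unique)
qed

theorem periodic_solution_exists:
  "\<exists>\<theta> \<theta>'. C2_with \<theta> \<theta>' (\<lambda>t. h t (\<theta> t)) \<and> periodic_with T \<theta> \<and>
          (\<forall>t. \<alpha> + \<delta> / M \<le> \<theta> t \<and> \<theta> t \<le> \<beta> - \<delta> / M)"
proof -
  obtain \<theta>' where "C2_with (iter_op solution) \<theta>' (\<lambda>t. M * iter_op solution t - rhs solution t)"
    using iter_op_C2_with[OF solution_admissible] by blast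
  then have "C2_with solution \<theta>' (\<lambda>t. h t (solution t))"
    by (simp add: iter_op_solution rhs_def)
  moreover have "periodic_with T solution"
    using solution_admissible by (simp add: admissible_def periodic_with_def)
  moreover have "\<alpha> + \<delta> / M \<le> solution t \<and> solution t \<le> \<beta> - \<delta> / M" for t
    using iter_op_bounds[OF solution_admissible, of t] by (simp add: iter_op_solution)
  ultimately show ?thesis
    by blast
qed

end

section \<open>The pendulum equation in the angle variable\<close>

lemma sin_cos_combination_lipschitz:
  fixes a b :: real
  shows "\<bar>(a * sin y + b * cos y) - (a * sin x + b * cos x)\<bar> \<le> (\<bar>a\<bar> + \<bar>b\<bar>) * \<bar>y - x\<bar>"
proof -
  have "((\<lambda>y. a * sin y + b * cos y) has_field_derivative a * cos z - b * sin z) (at z within UNIV)" for z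
    by (auto intro!: derivative_eq_intros)
  moreover have "norm (a * cos z - b * sin z) \<le> \<bar>a\<bar> + \<bar>b\<bar>" for z
  proof -
    have "\<bar>a * cos z - b * sin z\<bar> \<le> \<bar>a\<bar> * \<bar>cos z\<bar> + \<bar>b\<bar> * \<bar>sin z\<bar>"
      using abs_triangle_ineq4 by (simp add: abs_mult[symmetric])
    also have "\<dots> \<le> \<bar>a\<bar> + \<bar>b\<bar>"
      by (intro add_mono mult_left_le) auto
    finally show ?thesis
      by simp
  qed
  ultimately show ?thesis
    using field_differentiable_bound[OF convex_UNIV, of "\<lambda>y. a * sin y + b * cos y"
        "\<lambda>z. a * cos z - b * sin z" "\<bar>a\<bar> + \<bar>b\<bar>" y x]
    by simp
qed

lemma C2_with_scaled_sin:
  assumes "C2_with \<theta> \<theta>' \<theta>''"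
  shows "C2_with (\<lambda>t. l * sin (\<theta> t)) (\<lambda>t. l * (cos (\<theta> t) * \<theta>' t))
           (\<lambda>t. l * (cos (\<theta> t) * \<theta>'' t - sin (\<theta> t) * (\<theta>' t)\<^sup>2))"
proof -
  have d: "\<And>t. (\<theta> has_real_derivative \<theta>' t) (at t)" "\<And>t. (\<theta>' has_real_derivative \<theta>'' t) (at t)"
    and "continuous_on UNIV \<theta>''"
    using assms by (auto simp: C2_with_def)
  moreover have "continuous_on UNIV \<theta>" "continuous_on UNIV \<theta>'"
    using d by (meson DERIV_continuous continuous_at_imp_continuous_on)+
  ultimately show ?thesis
    unfolding C2_with_def
    by (auto intro!: derivative_eq_intros continuous_intros simp: power2_eq_square algebra_simps)
qed

lemma C2_with_periodic_second_derivative: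
  assumes "C2_with f f' f''" "periodic_with T f" "T > 0"
  shows "periodic_with T f''" "bounded (range f'')"
proof -
  have f: "\<And>t. (f has_real_derivative f' t) (at t)" "\<And>t. (f' has_real_derivative f'' t) (at t)"
    and f''_continuous: "continuous_on UNIV f''"
    using assms(1) by (auto simp: C2_with_def)
  have "f (t + T) = f t" for t
    using assms(2) by (simp add: periodic_with_def)
  then have "f'' (t + T) = f'' t" for t
    using periodic_derivative[OF f(2) periodic_derivative[OF f(1)]] by blast
  then show "periodic_with T f''" "bounded (range f'')"
    using periodic_continuous_bounded[OF f''_continuous _ assms(3)] by (auto simp: periodic_with_def)
qed

lemma pendulum_angle_lower_upper:
  fixes e :: "real \<Rightarrow> real"
  assumes "l > 0" "g > 0" "T > 0" "continuous_on UNIV e" "periodic_with T e" "\<And>t. \<bar>e t\<bar> \<le> F"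
  shows "periodic_lower_upper (\<lambda>t y. g / l * sin y - e t / l * cos y) T (g / l + F / l + 1)
           (- (pi / 2)) (pi / 2) (g / l)"
proof
  have "0 \<le> F / l"
    using assms(6)[of 0] assms(1) by simp
  then show "g / l + F / l + 1 > 0"
    using assms(1,2) by (simp add: add_pos_nonneg)
  have "continuous_on UNIV (\<lambda>p :: real \<times> real. e (fst p))"
    by (intro continuous_on_compose2[OF assms(4)] continuous_intros) auto
  then show "continuous_on UNIV (\<lambda>(t, y). g / l * sin y - e t / l * cos y)"
    unfolding case_prod_beta using assms(1) by (intro continuous_intros) auto
  show "(g / l * sin y - e t / l * cos y) - (g / l * sin x - e t / l * cos x) \<le> (g / l + F / l + 1) * (y - x)"
    if "x \<le> y" for t x y
  proof -
    have "(g / l * sin y - e t / l * cos y) - (g / l * sin x - e t / l * cos x)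
            \<le> (\<bar>g / l\<bar> + \<bar>- e t / l\<bar>) * \<bar>y - x\<bar>"
      using sin_cos_combination_lipschitz[of "g / l" y "- e t / l" x] by (simp add: abs_le_iff)
    also have "\<dots> = (g / l + \<bar>e t\<bar> / l) * (y - x)"
      using assms(1,2) that by simp
    also have "\<dots> \<le> (g / l + F / l + 1) * (y - x)"
      using divide_right_mono[OF assms(6)[of t], of l] assms(1) that by (intro mult_right_mono) auto
    finally show ?thesis .
  qed
qed (use assms(1-3,5) in \<open>simp_all add: periodic_with_def\<close>)

lemma pendulum_equation_sin_substitution:
  fixes l g e y y' :: real
  assumes "l > 0" "cos y > 0"
  shows "l * (cos y * (g / l * sin y - e / l * cos y) - sin y * y'\<^sup>2)
       = (g / l\<^sup>2 * sqrt (l\<^sup>2 - (l * sin y)\<^sup>2) - (l * (cos y * y'))\<^sup>2 / (l\<^sup>2 - (l * sin y)\<^sup>2)) * (l * sin y)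
         - (l\<^sup>2 - (l * sin y)\<^sup>2) / l\<^sup>2 * e"
proof -
  have height: "l\<^sup>2 - (l * sin y)\<^sup>2 = (l * cos y)\<^sup>2"
    by (simp add: power_mult_distrib sin_squared_eq algebra_simps)
  have "sqrt ((l * cos y)\<^sup>2) = l * cos y"
    using assms by simp
  then show ?thesis
    unfolding height using assms by (simp add: field_simps power2_eq_square)
qed

lemma pendulum_solution_from_angle:
  assumes "l > 0" and "C2_with \<theta> \<theta>' (\<lambda>t. g / l * sin (\<theta> t) - e t / l * cos (\<theta> t))"
    and "periodic_with T \<theta>" and "\<And>t. \<bar>\<theta> t\<bar> < pi / 2"
  shows "\<exists>x x' x''. C2_with x x' x'' \<and> periodic_with T x \<and> (\<forall>t. \<bar>x t\<bar> < l) \<and>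
           (\<forall>t. x'' t = (g / l\<^sup>2 * sqrt (l\<^sup>2 - (x t)\<^sup>2) - (x' t)\<^sup>2 / (l\<^sup>2 - (x t)\<^sup>2)) * x t
                      - (l\<^sup>2 - (x t)\<^sup>2) / l\<^sup>2 * e t)"
proof -
  have cos_pos: "cos (\<theta> t) > 0" for t
    using assms(4)[of t] by (intro cos_gt_zero_pi) auto
  have "\<bar>l * sin (\<theta> t)\<bar> < l" for t
  proof -
    have "(sin (\<theta> t))\<^sup>2 < 1"
      using cos_pos[of t] by (simp add: sin_squared_eq)
    then show ?thesis
      using assms(1) by (simp add: abs_mult abs_square_less_1)
  qed
  with C2_with_scaled_sin[OF assms(2), of l] assms(3) show ?thesis
    using pendulum_equation_sin_substitution[OF assms(1) cos_pos]
    by (intro exI[of _ "\<lambda>t. l * sin (\<theta> t)"] exI conjI allI) (auto simp: periodic_with_def)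
qed

theorem theorem1p1:
  fixes l g T :: real and f f' f'' :: "real \<Rightarrow> real"
  assumes "l > 0" and "g > 0" and "T > 0"
    and "C2_with f f' f''" and "periodic_with T f"
  shows "\<exists>x x' x''. C2_with x x' x'' \<and> periodic_with T x \<and>
           (\<forall>t. \<bar>x t\<bar> < l) \<and>
           (\<forall>t. x'' t = (g / l\<^sup>2 * sqrt (l\<^sup>2 - (x t)\<^sup>2) - (x' t)\<^sup>2 / (l\<^sup>2 - (x t)\<^sup>2)) * x t
                      - (l\<^sup>2 - (x t)\<^sup>2) / l\<^sup>2 * f'' t)"
proof -
  obtain F where F: "\<And>t. \<bar>f'' t\<bar> \<le> F"
    using C2_with_periodic_second_derivative(2)[OF assms(4,5,3)] by (auto simp: bounded_real)
  have "continuous_on UNIV f''"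
    using assms(4) by (simp add: C2_with_def)
  with C2_with_periodic_second_derivative(1)[OF assms(4,5,3)] F assms(1-3)
  have lower_upper: "periodic_lower_upper (\<lambda>t y. g / l * sin y - f'' t / l * cos y) T (g / l + F / l + 1)
                       (- (pi / 2)) (pi / 2) (g / l)"
    by (intro pendulum_angle_lower_upper)
  then obtain \<theta> \<theta>' where \<theta>: "C2_with \<theta> \<theta>' (\<lambda>t. g / l * sin (\<theta> t) - f'' t / l * cos (\<theta> t))"
      "periodic_with T \<theta>"
    and \<theta>_bounds: "\<And>t. - (pi / 2) + g / l / (g / l + F / l + 1) \<le> \<theta> t \<and>
                        \<theta> t \<le> pi / 2 - g / l / (g / l + F / l + 1)"
    using periodic_lower_upper.periodic_solution_exists by blast
  have "0 < g / l / (g / l + F / l + 1)"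
    using assms(1,2) periodic_lower_upper.M_pos[OF lower_upper] by simp
  then have "\<bar>\<theta> t\<bar> < pi / 2" for t
    unfolding abs_less_iff using \<theta>_bounds[of t] by linarith
  then show ?thesis
    by (rule pendulum_solution_from_angle[OF assms(1) \<theta>])
qed

end
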